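(* Let $U=\{u_1,\dots,u_{3n}\}$ with $n\ge1$ and let $\mathcal{S}=\{S_1,\dots,S_p\}$, $p\ge 1$, be a family of $3$-element subsets of $U$. Fix an integer $m\ge 6n+3p$. Build the labeled complete bipartite graph $G$ with partite sets $V_1=\{x_1,\dots,x_{3n}\}\cup\{x(S_1),\dots,x(S_p)\}$ and $V_2=\{y_1,\dots,y_{3n}\}\cup\{y_k(S_i):1\le i\le p,\,1\le k\le m\}\cup\{z_1,\dots,z_{3n}\}$, with labels: $x_iy_j$ is $+$ iff $i=j$ or $u_i,u_j$ lie in a common member of $\mathcal{S}$; $x(S_i)y_k(S_\ell)$ is $+$ iff $i=\ell$; $x_iy_k(S_j)$ and $x(S_j)y_i$ are $+$ iff $u_i\in S_j$; $x_iz_j$ is $+$ for all $i,j$; $x(S_i)z_j$ is $-$ for all $i,j$. Assign tolerances $t_{x(S_i)}=3$ and $t_{x_i}=m(d(u_i)-1)+(c(u_i)-2)+(3n-3)$, where $d(u_i)$ is the number of members of $\mathcal{S}$ containing $u_i$ and $c(u_i)$ is the number of $u_j\in U\setminus\{u_i\}$ lying in a common member of $\mathcal{S}$ with $u_i$. Suppose $G$ has a clustering in which each $v\in V_1$ has at most $t_v$ incident errors. Then for every $u_j\in U$ there is a unique $S_i\in\mathcal{S}$ such that $x_j$ is in the same cluster as $x(S_i)$, and this $S_i$ satisfies: (1) $u_j\in S_i$, and (2) $x_j$ is in the same cluster as every vertex $y_\ell$ with $u_\ell\in S_i$.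
   Context: A clustering is a partition of $V(G)$. An error at a vertex $v$ is an incident edge that is a $+$ edge between different clusters or a $-$ edge within a cluster. *)

theory Defs
  imports Main "HOL-Library.Disjoint_Sets"
begin

text \<open>Vertices of the gadget graph G.
  X i = x_i, XS i = x(S_i), Y i = y_i, YS i k = y_k(S_i), Z i = z_i.\<close>
datatype vtx = X nat | XS nat | Y nat | YS nat nat | Z nat

definition V1 :: "nat \<Rightarrow> nat \<Rightarrow> vtx set" where
  "V1 n p = X ` {1..3*n} \<union> XS ` {1..p}"

definition V2 :: "nat \<Rightarrow> nat \<Rightarrow> nat \<Rightarrow> vtx set" where
  "V2 n p m = Y ` {1..3*n} \<union> {YS i k | i k. i \<in> {1..p} \<and> k \<in> {1..m}} \<union> Z ` {1..3*n}"

definition common :: "(nat \<Rightarrow> nat set) \<Rightarrow> nat \<Rightarrow> nat \<Rightarrow> nat \<Rightarrow> bool" where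
  "common S p i j = (\<exists>l\<in>{1..p}. i \<in> S l \<and> j \<in> S l)"

text \<open>Label of the edge v w (v in V1, w in V2): True means +, False means -.\<close>
fun plus_edge :: "(nat \<Rightarrow> nat set) \<Rightarrow> nat \<Rightarrow> vtx \<Rightarrow> vtx \<Rightarrow> bool" where
  "plus_edge S p (X i) (Y j) = (i = j \<or> common S p i j)"
| "plus_edge S p (XS i) (YS l k) = (i = l)"
| "plus_edge S p (X i) (YS j k) = (i \<in> S j)"
| "plus_edge S p (XS j) (Y i) = (i \<in> S j)"
| "plus_edge S p (X i) (Z j) = True"
| "plus_edge S p (XS i) (Z j) = False"
| "plus_edge S p _ _ = False"

definition same_cluster :: "vtx set set \<Rightarrow> vtx \<Rightarrow> vtx \<Rightarrow> bool" where
  "same_cluster P u v = (\<exists>C\<in>P. u \<in> C \<and> v \<in> C)"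

text \<open>Number of errors at a vertex v of V1 (all its incident edges go to V2).\<close>
definition errors :: "(nat \<Rightarrow> nat set) \<Rightarrow> nat \<Rightarrow> nat \<Rightarrow> nat \<Rightarrow> vtx set set \<Rightarrow> vtx \<Rightarrow> nat" where
  "errors S n p m P v = card {w \<in> V2 n p m.
      (plus_edge S p v w \<and> \<not> same_cluster P v w) \<or> (\<not> plus_edge S p v w \<and> same_cluster P v w)}"

definition dgr :: "(nat \<Rightarrow> nat set) \<Rightarrow> nat \<Rightarrow> nat \<Rightarrow> nat" where
  "dgr S p i = card {l \<in> {1..p}. i \<in> S l}"

definition cnb :: "(nat \<Rightarrow> nat set) \<Rightarrow> nat \<Rightarrow> nat \<Rightarrow> nat \<Rightarrow> nat" where
  "cnb S n p i = card {j \<in> {1..3*n}. j \<noteq> i \<and> common S p i j}"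

definition tol :: "(nat \<Rightarrow> nat set) \<Rightarrow> nat \<Rightarrow> nat \<Rightarrow> nat \<Rightarrow> vtx \<Rightarrow> int" where
  "tol S n p m v = (case v of
       XS i \<Rightarrow> 3
     | X i \<Rightarrow> int m * (int (dgr S p i) - 1) + (int (cnb S n p i) - 2) + (3 * int n - 3)
     | _ \<Rightarrow> 0)"

end

theory Submission
  imports Defs
begin

text \<open>
  A vertex x(S_l) has tolerance 3, so all but at most 3 of its m private neighbours y_k(S_l)
  share its cluster. Consequently two vertices x(S_l) never share a cluster, and the cluster of
  x_j contains some x(S_i) with u_j \<in> S_i: otherwise x_j has at least m - 3 errors for each of
  the d(u_j) sets containing u_j, more than its tolerance allows since m \<ge> 6n + 3p.
  Finally add the error bounds at x_j and x(S_i). For every other set S_l containing u_j, each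
  y_k(S_l) is an error at exactly one of the two vertices, which accounts for m(d(u_j) - 1); the
  z's contribute exactly 3n; and the y's contribute at least c(u_j) - 2 + 2t, where t counts the
  y_l with u_l \<in> S_i outside the cluster. The sum of the tolerances forces t = 0.
\<close>

lemma card_filter_add_card_filter_not:
  assumes "finite F"
  shows "card {x\<in>F. Q x} + card {x\<in>F. \<not> Q x} = card F"
  using card_Int_Diff[OF assms, of "{x. Q x}"] by (simp add: Int_def set_diff_eq conj_commute)

lemma card_le_card_Diff_add:
  assumes "finite N" "finite I" "finite T"
  shows "card N + card (T - I) \<le> card (N - I) + card (I - T) + card T"
proof -
  have "card N = card (N \<inter> I) + card (N - I)"
    using card_Int_Diff[OF assms(1)] .
  moreover have "card (N \<inter> I) \<le> card I"
    using assms(2) by (simp add: card_mono)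
  moreover have "card I + card (T - I) = card (I - T) + card T"
    using card_Int_Diff[OF assms(2), of T] card_Int_Diff[OF assms(3), of I] by (simp add: Int_commute)
  ultimately show ?thesis by linarith
qed

lemma errors_eq_sum:
  "errors S n p m P v =
     card {l\<in>{1..3*n}. plus_edge S p v (Y l) \<noteq> same_cluster P v (Y l)}
   + (\<Sum>l=1..p. card {k\<in>{1..m}. plus_edge S p v (YS l k) \<noteq> same_cluster P v (YS l k)})
   + card {l\<in>{1..3*n}. plus_edge S p v (Z l) \<noteq> same_cluster P v (Z l)}"
proof -
  let ?E = "\<lambda>w. plus_edge S p v w \<noteq> same_cluster P v w"
  let ?Ys = "Y ` {l\<in>{1..3*n}. ?E (Y l)}"
  let ?YSs = "\<Union>l\<in>{1..p}. YS l ` {k\<in>{1..m}. ?E (YS l k)}"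
  let ?Zs = "Z ` {l\<in>{1..3*n}. ?E (Z l)}"
  have "{w \<in> V2 n p m. ?E w} = ?Ys \<union> ?YSs \<union> ?Zs"
    unfolding V2_def by auto
  moreover have "errors S n p m P v = card {w \<in> V2 n p m. ?E w}"
    unfolding errors_def by metis
  moreover have "card ?YSs = (\<Sum>l=1..p. card {k\<in>{1..m}. ?E (YS l k)})"
    by (subst card_UN_disjoint) (auto simp: card_image inj_on_def)
  moreover have "card (?Ys \<union> ?YSs \<union> ?Zs) = card ?Ys + card ?YSs + card ?Zs"
    by (subst card_Un_disjoint, auto)+
  ultimately show ?thesis
    by (simp add: card_image inj_on_def)
qed

lemma dgr_le: "dgr S p j \<le> p"
proof -
  have "card {l\<in>{1..p}. j \<in> S l} \<le> card {1..p}" by (rule card_mono) auto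
  then show ?thesis unfolding dgr_def by simp
qed

lemma card_common_neighbourhood:
  assumes "j \<in> {1..3*n}"
  shows "card {l\<in>{1..3*n}. l = j \<or> common S p j l} = cnb S n p j + 1"
proof -
  have "{l\<in>{1..3*n}. l = j \<or> common S p j l} = insert j {l\<in>{1..3*n}. l \<noteq> j \<and> common S p j l}"
    using assms by auto
  then show ?thesis unfolding cnb_def by simp
qed

lemma cnb_less:
  assumes "j \<in> {1..3*n}"
  shows "cnb S n p j < 3*n"
proof -
  have "card {l\<in>{1..3*n}. l = j \<or> common S p j l} \<le> card {1..3*n}" by (rule card_mono) auto
  then show ?thesis using card_common_neighbourhood[OF assms, of S p] by simp
qed

lemma same_cluster_iff_mem:
  assumes "partition_on A P" "C \<in> P" "v \<in> C"
  shows "same_cluster P v w \<longleftrightarrow> w \<in> C"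
  using assms unfolding same_cluster_def partition_on_def by (metis disjointD disjoint_iff)

locale gadget_clustering =
  fixes n p m :: nat and S :: "nat \<Rightarrow> nat set" and P :: "vtx set set"
  assumes n_pos: "n \<ge> 1" and p_pos: "p \<ge> 1"
    and triples: "\<forall>i\<in>{1..p}. S i \<subseteq> {1..3*n} \<and> card (S i) = 3"
    and m_large: "m \<ge> 6*n + 3*p"
    and partition: "partition_on (V1 n p \<union> V2 n p m) P"
    and tolerant: "\<forall>v\<in>V1 n p. int (errors S n p m P v) \<le> tol S n p m v"
begin

lemma errors_eq_sum_cluster:
  assumes "C \<in> P" "v \<in> C"
  shows "errors S n p m P v =
     card {l\<in>{1..3*n}. plus_edge S p v (Y l) \<noteq> (Y l \<in> C)}
   + (\<Sum>l=1..p. card {k\<in>{1..m}. plus_edge S p v (YS l k) \<noteq> (YS l k \<in> C)})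
   + card {l\<in>{1..3*n}. plus_edge S p v (Z l) \<noteq> (Z l \<in> C)}"
  using errors_eq_sum same_cluster_iff_mem[OF partition assms] by presburger

lemma cluster_exists:
  assumes "v \<in> V1 n p \<union> V2 n p m"
  obtains C where "C \<in> P" "v \<in> C"
  using partition_onD1[OF partition] assms by blast

lemma errors_XS_le:
  assumes "i \<in> {1..p}"
  shows "errors S n p m P (XS i) \<le> 3"
  using bspec[OF tolerant, of "XS i"] assms by (auto simp: V1_def tol_def)

lemma errors_X_le:
  assumes "j \<in> {1..3*n}"
  shows "int (errors S n p m P (X j))
    \<le> int m * (int (dgr S p j) - 1) + (int (cnb S n p j) - 2) + (3 * int n - 3)"
  using bspec[OF tolerant, of "X j"] assms by (auto simp: V1_def tol_def)

lemma sum_YS_mismatch_le_errors: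
  assumes "C \<in> P" "v \<in> C" "D \<subseteq> {1..p}"
  shows "(\<Sum>l\<in>D. card {k\<in>{1..m}. plus_edge S p v (YS l k) \<noteq> (YS l k \<in> C)})
    \<le> errors S n p m P v"
proof -
  have "(\<Sum>l\<in>D. card {k\<in>{1..m}. plus_edge S p v (YS l k) \<noteq> (YS l k \<in> C)})
      \<le> (\<Sum>l=1..p. card {k\<in>{1..m}. plus_edge S p v (YS l k) \<noteq> (YS l k \<in> C)})"
    by (rule sum_mono2) (use assms(3) in auto)
  then show ?thesis
    unfolding errors_eq_sum_cluster[OF assms(1,2)] by linarith
qed

lemma card_YS_outside_cluster_le:
  assumes "i \<in> {1..p}" "C \<in> P" "XS i \<in> C"
  shows "card {k\<in>{1..m}. YS i k \<notin> C} \<le> 3"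
  using sum_YS_mismatch_le_errors[OF assms(2,3), of "{i}"] errors_XS_le[OF assms(1)] assms(1)
  by simp

lemma card_YS_inside_cluster_ge:
  assumes "i \<in> {1..p}" "C \<in> P" "XS i \<in> C"
  shows "m - 3 \<le> card {k\<in>{1..m}. YS i k \<in> C}"
  using card_YS_outside_cluster_le[OF assms] card_filter_add_card_filter_not[of "{1..m}" "\<lambda>k. YS i k \<in> C"]
  by simp

lemma card_YS_in_foreign_cluster_le:
  assumes "i \<in> {1..p}" "C \<in> P" "XS i \<notin> C"
  shows "card {k\<in>{1..m}. YS i k \<in> C} \<le> 3"
proof -
  obtain C' where C': "C' \<in> P" "XS i \<in> C'"
    using cluster_exists[of "XS i"] assms(1) unfolding V1_def by blast
  have "C \<noteq> C'" using assms(3) C'(2) by blast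
  then have "C \<inter> C' = {}"
    using disjointD[OF partition_onD2[OF partition] assms(2) C'(1)] by blast
  then have "card {k\<in>{1..m}. YS i k \<in> C} \<le> card {k\<in>{1..m}. YS i k \<notin> C'}"
    by (intro card_mono) auto
  then show ?thesis
    using card_YS_outside_cluster_le[OF assms(1) C'] by linarith
qed

lemma XS_same_cluster_eq:
  assumes "i \<in> {1..p}" "i' \<in> {1..p}" "C \<in> P" "XS i \<in> C" "XS i' \<in> C"
  shows "i' = i"
proof (rule ccontr)
  assume "i' \<noteq> i"
  then have "card {k\<in>{1..m}. YS i' k \<in> C} \<le> errors S n p m P (XS i)"
    using sum_YS_mismatch_le_errors[OF assms(3,4), of "{i'}"] assms(2) by simp
  moreover have "m - 3 \<le> card {k\<in>{1..m}. YS i' k \<in> C}"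
    using card_YS_inside_cluster_ge[OF assms(2,3,5)] .
  ultimately show False
    using errors_XS_le[OF assms(1)] n_pos p_pos m_large by linarith
qed

lemma X_cluster_contains_XS:
  assumes "j \<in> {1..3*n}" "C \<in> P" "X j \<in> C"
  shows "\<exists>i\<in>{1..p}. j \<in> S i \<and> XS i \<in> C"
proof (rule ccontr)
  assume no_XS: "\<not> ?thesis"
  define D where "D = {l\<in>{1..p}. j \<in> S l}"
  have "m - 3 \<le> card {k\<in>{1..m}. YS l k \<notin> C}" if "l \<in> D" for l
    using card_YS_in_foreign_cluster_le[of l C] that no_XS assms(2)
      card_filter_add_card_filter_not[of "{1..m}" "\<lambda>k. YS l k \<in> C"]
    unfolding D_def by auto
  then have "card D * (m - 3) \<le> (\<Sum>l\<in>D. card {k\<in>{1..m}. YS l k \<notin> C})"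
    using sum_mono[of D "\<lambda>_. m - 3"] by simp
  also have "\<dots> = (\<Sum>l\<in>D. card {k\<in>{1..m}. plus_edge S p (X j) (YS l k) \<noteq> (YS l k \<in> C)})"
    by (rule sum.cong) (auto simp: D_def)
  also have "\<dots> \<le> errors S n p m P (X j)"
    by (rule sum_YS_mismatch_le_errors[OF assms(2,3)]) (auto simp: D_def)
  finally have "int (card D * (m - 3)) \<le> int (errors S n p m P (X j))"
    by (rule of_nat_mono)
  moreover have "int (card D * (m - 3)) = int (card D) * (int m - 3)"
    using n_pos m_large by (simp add: of_nat_diff)
  moreover have "card D = dgr S p j" unfolding D_def dgr_def ..
  ultimately show False
    using errors_X_le[OF assms(1)] dgr_le[of S p j] cnb_less[OF assms(1), of S p] m_large
    by (simp add: algebra_simps)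
qed

lemma dgr_pos:
  assumes "i \<in> {1..p}" "j \<in> S i"
  shows "dgr S p j \<ge> 1"
  using assms unfolding dgr_def by (auto simp: Suc_le_eq card_gt_0_iff)

lemma card_Y_mismatch_ge:
  assumes "j \<in> {1..3*n}" "i \<in> {1..p}"
  shows "cnb S n p j + 2 * card {l\<in>S i. Y l \<notin> C}
    \<le> card {l\<in>{1..3*n}. (j = l \<or> common S p j l) \<noteq> (Y l \<in> C)}
      + card {l\<in>{1..3*n}. (l \<in> S i) \<noteq> (Y l \<in> C)} + 2"
proof -
  define I where "I = {l\<in>{1..3*n}. Y l \<in> C}"
  define N where "N = {l\<in>{1..3*n}. l = j \<or> common S p j l}"
  have Si: "S i \<subseteq> {1..3*n}" "card (S i) = 3" "finite (S i)"
    using triples assms(2) by (auto intro: card_ge_0_finite)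
  have "card {l\<in>S i. Y l \<notin> C} = card (S i - I)"
    by (rule arg_cong[where f = card]) (use Si(1) in \<open>auto simp: I_def\<close>)
  moreover have "{l\<in>{1..3*n}. (l \<in> S i) \<noteq> (Y l \<in> C)} = (S i - I) \<union> (I - S i)"
    using Si(1) unfolding I_def by auto
  then have "card {l\<in>{1..3*n}. (l \<in> S i) \<noteq> (Y l \<in> C)} = card (S i - I) + card (I - S i)"
    using Si(3) by (simp add: card_Un_disjoint I_def Diff_Int_distrib2)
  moreover have "card (N - I) \<le> card {l\<in>{1..3*n}. (j = l \<or> common S p j l) \<noteq> (Y l \<in> C)}"
    by (rule card_mono) (auto simp: N_def I_def)
  moreover have "card N + card (S i - I) \<le> card (N - I) + card (I - S i) + card (S i)"
    by (rule card_le_card_Diff_add) (auto simp: N_def I_def Si(3))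
  moreover have "card N = cnb S n p j + 1"
    unfolding N_def by (rule card_common_neighbourhood[OF assms(1)])
  ultimately show ?thesis
    using Si(2) by linarith
qed

lemma card_YS_mismatch_ge:
  assumes "i \<in> {1..p}" "j \<in> S i"
  shows "(dgr S p j - 1) * m
    \<le> (\<Sum>l=1..p. card {k\<in>{1..m}. (j \<in> S l) \<noteq> (YS l k \<in> C)})
      + (\<Sum>l=1..p. card {k\<in>{1..m}. (i = l) \<noteq> (YS l k \<in> C)})"
proof -
  define D where "D = {l\<in>{1..p}. j \<in> S l} - {i}"
  let ?mis_X = "\<lambda>l. card {k\<in>{1..m}. (j \<in> S l) \<noteq> (YS l k \<in> C)}"
  let ?mis_XS = "\<lambda>l. card {k\<in>{1..m}. (i = l) \<noteq> (YS l k \<in> C)}"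
  have "card D = dgr S p j - 1"
    unfolding D_def dgr_def using assms by simp
  moreover have "?mis_X l + ?mis_XS l = m" if "l \<in> D" for l
    using that card_filter_add_card_filter_not[of "{1..m}" "\<lambda>k. YS l k \<notin> C"] by (simp add: D_def)
  then have "card D * m = (\<Sum>l\<in>D. ?mis_X l + ?mis_XS l)" by simp
  moreover have "\<dots> \<le> (\<Sum>l=1..p. ?mis_X l + ?mis_XS l)"
    by (rule sum_mono2) (auto simp: D_def)
  ultimately show ?thesis
    by (simp only: sum.distrib)
qed

lemma Y_triple_in_cluster:
  assumes "j \<in> {1..3*n}" "i \<in> {1..p}" "j \<in> S i" "C \<in> P" "X j \<in> C" "XS i \<in> C"
  shows "Y ` S i \<subseteq> C"
proof -
  have err_XS: "card {l\<in>{1..3*n}. (l \<in> S i) \<noteq> (Y l \<in> C)}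
      + (\<Sum>l=1..p. card {k\<in>{1..m}. (i = l) \<noteq> (YS l k \<in> C)})
      + card {l\<in>{1..3*n}. Z l \<in> C} \<le> 3"
    using errors_eq_sum_cluster[OF assms(4,6)] errors_XS_le[OF assms(2)] by simp
  have err_X: "int (card {l\<in>{1..3*n}. (j = l \<or> common S p j l) \<noteq> (Y l \<in> C)}
      + (\<Sum>l=1..p. card {k\<in>{1..m}. (j \<in> S l) \<noteq> (YS l k \<in> C)})
      + card {l\<in>{1..3*n}. Z l \<notin> C})
    \<le> int m * (int (dgr S p j) - 1) + (int (cnb S n p j) - 2) + (3 * int n - 3)"
    using errors_eq_sum_cluster[OF assms(4,5)] errors_X_le[OF assms(1)] by simp
  have Z: "card {l\<in>{1..3*n}. Z l \<in> C} + card {l\<in>{1..3*n}. Z l \<notin> C} = 3*n"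
    using card_filter_add_card_filter_not[of "{1..3*n}"] by simp
  have YS: "int ((dgr S p j - 1) * m) = int m * (int (dgr S p j) - 1)"
    using dgr_pos[OF assms(2,3)] by (simp add: of_nat_diff)
  have "card {l\<in>S i. Y l \<notin> C} = 0"
    using err_XS err_X Z YS card_Y_mismatch_ge[OF assms(1,2), of C]
      of_nat_mono[OF card_YS_mismatch_ge[OF assms(2,3), of C], where 'a=int]
    unfolding of_nat_add by linarith
  moreover have "finite (S i)"
    using triples assms(2) by (auto intro: card_ge_0_finite)
  ultimately show ?thesis by auto
qed

end

theorem lemma4:
  fixes n p m :: nat and S :: "nat \<Rightarrow> nat set" and P :: "vtx set set"
  assumes "n \<ge> 1" and "p \<ge> 1"
    and "\<forall>i\<in>{1..p}. S i \<subseteq> {1..3*n} \<and> card (S i) = 3"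
    and "inj_on S {1..p}"
    and "m \<ge> 6*n + 3*p"
    and "partition_on (V1 n p \<union> V2 n p m) P"
    and "\<forall>v\<in>V1 n p. int (errors S n p m P v) \<le> tol S n p m v"
  shows "\<forall>j\<in>{1..3*n}. \<exists>i\<in>{1..p}. same_cluster P (X j) (XS i)
            \<and> (\<forall>i'\<in>{1..p}. same_cluster P (X j) (XS i') \<longrightarrow> i' = i)
            \<and> j \<in> S i
            \<and> (\<forall>l\<in>{1..3*n}. l \<in> S i \<longrightarrow> same_cluster P (X j) (Y l))"
proof
  interpret gadget_clustering n p m S P
    using assms(1-3,5-7) by unfold_locales
  fix j assume j: "j \<in> {1..3*n}"
  obtain C where C: "C \<in> P" "X j \<in> C"
    using cluster_exists[of "X j"] j unfolding V1_def by blast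
  obtain i where i: "i \<in> {1..p}" "j \<in> S i" "XS i \<in> C"
    using X_cluster_contains_XS[OF j C] by blast
  have same_X: "same_cluster P (X j) w \<longleftrightarrow> w \<in> C" for w
    using same_cluster_iff_mem[OF partition C] .
  show "\<exists>i\<in>{1..p}. same_cluster P (X j) (XS i)
            \<and> (\<forall>i'\<in>{1..p}. same_cluster P (X j) (XS i') \<longrightarrow> i' = i)
            \<and> j \<in> S i
            \<and> (\<forall>l\<in>{1..3*n}. l \<in> S i \<longrightarrow> same_cluster P (X j) (Y l))"
    unfolding same_X
    using i XS_same_cluster_eq[OF i(1) _ C(1) i(3)] Y_triple_in_cluster[OF j i(1,2) C i(3)]
    by blast
qed


end
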